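(* Let $T>0$, $I=[0,T]$, $\nu_1,\nu_2\in\mathbb{R}$, $p>1$. Let $\Phi:\mathbb{R}\to\mathbb{R}$ be a strictly increasing homeomorphism; let $A:W^{1,p}(I)\to C(I,\mathbb{R})$, $x\mapsto A_x$, be continuous w.r.t. the uniform topology, with $h_1,h_2\in C(I,\mathbb{R})$, $h_1,h_2\ge0$, $1/h_1,1/h_2\in L^p(I)$ and $h_1(t)\le A_x(t)\le h_2(t)$ for all $x\in W^{1,p}(I)$, $t\in I$; let $F:W^{1,p}(I)\to L^1(I)$, $x\mapsto F_x$, be continuous with $|F_x(t)|\le\psi(t)$ for all $x$ and a.e. $t$, for some non-negative $\psi\in L^1(I)$. Set $\mathcal{F}_x(t):=\int_0^tF_x(s)\,ds$. Then for every $x\in W^{1,p}(I)$ there exists a unique $\xi_x\in\mathbb{R}$ such that $\int_0^T\frac{1}{A_x(t)}\Phi^{-1}(\xi_x+\mathcal{F}_x(t))\,dt=\nu_2-\nu_1$, and there exists a constant $\mathbf{c}_0>0$ such that $|\xi_x|\le\mathbf{c}_0$ for every $x\in W^{1,p}(I)$.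
   Context: $W^{1,p}(I)$ is regarded as a subspace of $C(I,\mathbb{R})$; continuity of $A$ refers to the sup norm on both sides. *)

theory Defs
  imports "HOL-Analysis.Analysis"
begin

definition Lp_space :: "real \<Rightarrow> real \<Rightarrow> (real \<Rightarrow> real) set" where
  "Lp_space T p = {g. g \<in> borel_measurable (lebesgue_on {0..T}) \<and>
                       integrable (lebesgue_on {0..T}) (\<lambda>t. \<bar>g t\<bar> powr p)}"

text \<open>W^{1,p}(I), via the (continuous) absolutely continuous representative:
  x(t) = x(0) + int_0^t g with g in L^p(I). Only values on I matter.\<close>
definition W1p :: "real \<Rightarrow> real \<Rightarrow> (real \<Rightarrow> real) set" where
  "W1p T p = {x. \<exists>g \<in> Lp_space T p. \<forall>t\<in>{0..T}.
                   x t = x 0 + (LINT s|lebesgue_on {0..t}. g s)}"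

definition sup_dist :: "real \<Rightarrow> (real \<Rightarrow> real) \<Rightarrow> (real \<Rightarrow> real) \<Rightarrow> real" where
  "sup_dist T x y = (SUP t\<in>{0..T}. \<bar>x t - y t\<bar>)"

definition L1_dist :: "real \<Rightarrow> (real \<Rightarrow> real) \<Rightarrow> (real \<Rightarrow> real) \<Rightarrow> real" where
  "L1_dist T f g = (LINT t|lebesgue_on {0..T}. \<bar>f t - g t\<bar>)"

end

theory Submission
  imports Defs
begin

(* Fix x, and put a = 1 / A_x, c(t) = int_0^t F_x and G(xi) = int_0^T a(t) Phi^-1(xi + c(t)) dt.
   G is continuous and strictly increasing, so G(xi) = nu := nu2 - nu1 has exactly one solution
   once G takes values on both sides of nu. Now |c| <= K := int psi and a >= 1/h2, where
   m := int 1/h2 > 0; since Phi^-1 is increasing, G(Phi(R) + K) >= R m and G(Phi(-R) - K) <= -R m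
   for R >= 0. With R = |nu| / m the solution therefore lies in [Phi(-R) - K, Phi(R) + K], an
   interval independent of x. *)

lemma integrable_mult_shifted_comp:
  fixes a c :: "'a \<Rightarrow> real" and g :: "real \<Rightarrow> real"
  assumes a: "integrable M a"
    and c: "c \<in> borel_measurable M" "\<forall>t\<in>space M. \<bar>c t\<bar> \<le> K"
    and g: "continuous_on UNIV g"
  shows "integrable M (\<lambda>t. a t * g (\<xi> + c t))"
proof -
  have "compact (g ` {\<xi> - K..\<xi> + K})"
    using g by (intro compact_continuous_image) (auto intro: continuous_on_subset)
  then obtain B where B: "\<forall>y\<in>{\<xi> - K..\<xi> + K}. \<bar>g y\<bar> \<le> B"
    by (auto dest!: compact_imp_bounded simp: bounded_iff)
  have [measurable]: "g \<in> borel_measurable borel"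
    using g by (rule borel_measurable_continuous_onI)
  show ?thesis
  proof (rule Bochner_Integration.integrable_bound[where f="\<lambda>t. B * a t"])
    show "integrable M (\<lambda>t. B * a t)" using a by simp
    show "(\<lambda>t. a t * g (\<xi> + c t)) \<in> borel_measurable M"
      using a c(1) by measurable
    have "\<bar>g (\<xi> + c t)\<bar> \<le> \<bar>B\<bar>" if "t \<in> space M" for t
    proof -
      have "\<xi> + c t \<in> {\<xi> - K..\<xi> + K}" using c(2) that by (auto simp: abs_le_iff)
      then show ?thesis using B abs_ge_self order_trans by blast
    qed
    then show "AE t in M. norm (a t * g (\<xi> + c t)) \<le> norm (B * a t)"
      by (intro AE_I2) (simp add: abs_mult mult.commute[of "\<bar>B\<bar>"] mult_left_mono)
  qed
qed

lemma continuous_on_integral_mult_shifted_comp: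
  fixes a c :: "'a \<Rightarrow> real" and g :: "real \<Rightarrow> real"
  assumes a: "integrable M a"
    and c: "c \<in> borel_measurable M" "\<forall>t\<in>space M. \<bar>c t\<bar> \<le> K"
    and g: "continuous_on UNIV g"
  shows "continuous_on UNIV (\<lambda>\<xi>. \<integral>t. a t * g (\<xi> + c t) \<partial>M)"
  unfolding continuous_on_iff
proof (intro ballI allI impI)
  fix \<xi>0 e :: real assume e: "e > 0"
  define I where "I = (\<integral>t. \<bar>a t\<bar> \<partial>M)"
  have I: "I \<ge> 0" unfolding I_def by simp
  have "uniformly_continuous_on {\<xi>0 - K - 1..\<xi>0 + K + 1} g"
    using g by (intro compact_uniformly_continuous) (auto intro: continuous_on_subset)
  moreover have "e / (I + 1) > 0" using e I by simp
  ultimately obtain d where d: "d > 0" and dd: "\<forall>u\<in>{\<xi>0 - K - 1..\<xi>0 + K + 1}.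
      \<forall>v\<in>{\<xi>0 - K - 1..\<xi>0 + K + 1}. dist v u < d \<longrightarrow> dist (g v) (g u) < e / (I + 1)"
    unfolding uniformly_continuous_on_def by metis
  show "\<exists>d>0. \<forall>\<xi>\<in>UNIV. dist \<xi> \<xi>0 < d \<longrightarrow>
      dist (\<integral>t. a t * g (\<xi> + c t) \<partial>M) (\<integral>t. a t * g (\<xi>0 + c t) \<partial>M) < e"
  proof (intro exI[of _ "min d 1"] conjI ballI impI)
    fix \<xi> :: real assume "dist \<xi> \<xi>0 < min d 1"
    then have close: "\<bar>\<xi> - \<xi>0\<bar> < d" "\<bar>\<xi> - \<xi>0\<bar> < 1" by (auto simp: dist_real_def)
    have int: "integrable M (\<lambda>t. a t * g (\<xi> + c t))" "integrable M (\<lambda>t. a t * g (\<xi>0 + c t))"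
      using a c g by (auto intro: integrable_mult_shifted_comp)
    have pointwise: "\<bar>a t * g (\<xi> + c t) - a t * g (\<xi>0 + c t)\<bar> \<le> \<bar>a t\<bar> * (e / (I + 1))"
      if "t \<in> space M" for t
    proof -
      have "\<xi> + c t \<in> {\<xi>0 - K - 1..\<xi>0 + K + 1}" "\<xi>0 + c t \<in> {\<xi>0 - K - 1..\<xi>0 + K + 1}"
        using c(2) that close by (auto simp: abs_le_iff)
      then have "\<bar>g (\<xi> + c t) - g (\<xi>0 + c t)\<bar> \<le> e / (I + 1)"
        using dd close by (fastforce simp: dist_real_def)
      then show ?thesis
        unfolding right_diff_distrib[symmetric] abs_mult by (rule mult_left_mono) simp
    qed
    have "dist (\<integral>t. a t * g (\<xi> + c t) \<partial>M) (\<integral>t. a t * g (\<xi>0 + c t) \<partial>M)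
        = \<bar>\<integral>t. a t * g (\<xi> + c t) - a t * g (\<xi>0 + c t) \<partial>M\<bar>"
      using int by (simp add: dist_real_def)
    also have "\<dots> \<le> (\<integral>t. \<bar>a t * g (\<xi> + c t) - a t * g (\<xi>0 + c t)\<bar> \<partial>M)"
      by (rule integral_abs_bound)
    also have "\<dots> \<le> (\<integral>t. \<bar>a t\<bar> * (e / (I + 1)) \<partial>M)"
      using int a pointwise by (intro integral_mono) auto
    also have "\<dots> = I * (e / (I + 1))" unfolding I_def by simp
    also have "\<dots> < e" using I e by (simp add: field_simps)
    finally show "dist (\<integral>t. a t * g (\<xi> + c t) \<partial>M) (\<integral>t. a t * g (\<xi>0 + c t) \<partial>M) < e" .
  qed (use d in simp)
qed

lemma integral_mult_shifted_comp_bounds: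
  fixes a c :: "'a \<Rightarrow> real" and g :: "real \<Rightarrow> real"
  assumes a: "integrable M a" "AE t in M. 0 \<le> a t"
    and c: "c \<in> borel_measurable M" "\<forall>t\<in>space M. \<bar>c t\<bar> \<le> K"
    and g: "continuous_on UNIV g" "mono g"
  shows "g (\<xi> - K) * (\<integral>t. a t \<partial>M) \<le> (\<integral>t. a t * g (\<xi> + c t) \<partial>M)"
    and "(\<integral>t. a t * g (\<xi> + c t) \<partial>M) \<le> g (\<xi> + K) * (\<integral>t. a t \<partial>M)"
proof -
  have int: "integrable M (\<lambda>t. a t * g (\<xi> + c t))"
    using a c g by (intro integrable_mult_shifted_comp)
  have pointwise: "AE t in M. a t * g (\<xi> - K) \<le> a t * g (\<xi> + c t) \<and> a t * g (\<xi> + c t) \<le> a t * g (\<xi> + K)"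
    using a(2) AE_space
  proof eventually_elim
    case (elim t)
    then have "g (\<xi> - K) \<le> g (\<xi> + c t)" "g (\<xi> + c t) \<le> g (\<xi> + K)"
      using c(2) by (auto intro!: monoD[OF g(2)] simp: abs_le_iff)
    then show ?case using elim(1) by (auto intro: mult_left_mono)
  qed
  have "(\<integral>t. a t * g (\<xi> - K) \<partial>M) \<le> (\<integral>t. a t * g (\<xi> + c t) \<partial>M)"
    by (rule integral_mono_AE) (use a int pointwise in \<open>auto elim: eventually_mono\<close>)
  moreover have "(\<integral>t. a t * g (\<xi> + c t) \<partial>M) \<le> (\<integral>t. a t * g (\<xi> + K) \<partial>M)"
    by (rule integral_mono_AE) (use a int pointwise in \<open>auto elim: eventually_mono\<close>)
  ultimately show "g (\<xi> - K) * (\<integral>t. a t \<partial>M) \<le> (\<integral>t. a t * g (\<xi> + c t) \<partial>M)"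
    and "(\<integral>t. a t * g (\<xi> + c t) \<partial>M) \<le> g (\<xi> + K) * (\<integral>t. a t \<partial>M)"
    by (simp_all add: mult.commute)
qed

lemma strict_mono_integral_mult_shifted_comp:
  fixes a c :: "'a \<Rightarrow> real" and g :: "real \<Rightarrow> real"
  assumes a: "integrable M a" "AE t in M. 0 \<le> a t" "0 < (\<integral>t. a t \<partial>M)"
    and c: "c \<in> borel_measurable M" "\<forall>t\<in>space M. \<bar>c t\<bar> \<le> K"
    and g: "continuous_on UNIV g" "strict_mono g"
  shows "strict_mono (\<lambda>\<xi>. \<integral>t. a t * g (\<xi> + c t) \<partial>M)"
proof (rule strict_monoI)
  fix \<xi>1 \<xi>2 :: real assume "\<xi>1 < \<xi>2"
  then have gap: "g (\<xi>1 + c t) < g (\<xi>2 + c t)" for t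
    using g(2) by (simp add: strict_mono_less)
  define d where "d t = a t * g (\<xi>2 + c t) - a t * g (\<xi>1 + c t)" for t
  have int: "integrable M (\<lambda>t. a t * g (\<xi>1 + c t))" "integrable M (\<lambda>t. a t * g (\<xi>2 + c t))"
    using a(1) c g(1) by (auto intro: integrable_mult_shifted_comp)
  then have int_d: "integrable M d" unfolding d_def by simp
  have d_nonneg: "AE t in M. 0 \<le> d t"
    using a(2)
  proof eventually_elim
    case (elim t)
    show ?case
      unfolding d_def right_diff_distrib[symmetric] using elim gap[of t] by simp
  qed
  have "(\<integral>t. d t \<partial>M) \<noteq> 0"
  proof
    assume "(\<integral>t. d t \<partial>M) = 0"
    then have "AE t in M. d t = 0" using integral_nonneg_eq_0_iff_AE[OF int_d d_nonneg] by simp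
    then have "AE t in M. a t = 0"
    proof eventually_elim
      case (elim t)
      then show ?case
        using gap[of t] unfolding d_def right_diff_distrib[symmetric] by simp
    qed
    then have "(\<integral>t. a t \<partial>M) = 0" using integral_nonneg_eq_0_iff_AE[OF a(1,2)] by simp
    with a(3) show False by simp
  qed
  with integral_nonneg_AE[OF d_nonneg] have "0 < (\<integral>t. d t \<partial>M)" by linarith
  then show "(\<integral>t. a t * g (\<xi>1 + c t) \<partial>M) < (\<integral>t. a t * g (\<xi>2 + c t) \<partial>M)"
    using int by (simp add: d_def)
qed

lemma strict_mono_continuous_ex1_preimage:
  fixes G :: "real \<Rightarrow> real"
  assumes "strict_mono G" "continuous_on UNIV G" "G a \<le> y" "y \<le> G b"
  shows "\<exists>!x. G x = y"
proof -
  have "G a \<le> G b" using assms(3,4) by (rule order_trans)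
  then have "a \<le> b" using strict_mono_less_eq[OF assms(1)] by simp
  moreover have "continuous_on {a..b} G" using assms(2) by (rule continuous_on_subset) simp
  ultimately obtain x where "G x = y" using IVT'[of G a y b] assms(3,4) by blast
  then show ?thesis using strict_mono_eq[OF assms(1)] by (intro ex1I) auto
qed

lemma integral_mult_shifted_comp_eq_unique:
  fixes a c :: "'a \<Rightarrow> real" and g \<Phi> :: "real \<Rightarrow> real"
  assumes a: "integrable M a" "AE t in M. 0 \<le> a t" "0 < m" "m \<le> (\<integral>t. a t \<partial>M)"
    and c: "c \<in> borel_measurable M" "\<forall>t\<in>space M. \<bar>c t\<bar> \<le> K"
    and g: "continuous_on UNIV g" "strict_mono g" "\<And>z. g (\<Phi> z) = z"
  defines "G \<equiv> \<lambda>\<xi>. \<integral>t. a t * g (\<xi> + c t) \<partial>M"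
  shows "\<exists>!\<xi>. G \<xi> = \<nu>"
    and "G \<xi> = \<nu> \<Longrightarrow> \<Phi> (- (\<bar>\<nu>\<bar> / m)) - K \<le> \<xi> \<and> \<xi> \<le> \<Phi> (\<bar>\<nu>\<bar> / m) + K"
proof -
  define R where "R = \<bar>\<nu>\<bar> / m"
  have R: "0 \<le> R" "R * m = \<bar>\<nu>\<bar>" using a(3) by (simp_all add: R_def)
  have G_mono: "strict_mono G"
    unfolding G_def using a c g(1,2) by (intro strict_mono_integral_mult_shifted_comp) auto
  have bounds: "g (\<xi> - K) * (\<integral>t. a t \<partial>M) \<le> G \<xi>" "G \<xi> \<le> g (\<xi> + K) * (\<integral>t. a t \<partial>M)" for \<xi>
    unfolding G_def using integral_mult_shifted_comp_bounds[OF a(1,2) c g(1) strict_mono_mono[OF g(2)]]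
    by auto
  have "G (\<Phi> (- R) - K) \<le> - R * (\<integral>t. a t \<partial>M)" using bounds(2)[of "\<Phi> (- R) - K"] by (simp add: g(3))
  also have "\<dots> \<le> - R * m" using mult_left_mono[OF a(4) R(1)] by simp
  finally have lower: "G (\<Phi> (- R) - K) \<le> \<nu>" using R by linarith
  have "R * m \<le> R * (\<integral>t. a t \<partial>M)" using mult_left_mono[OF a(4) R(1)] .
  also have "\<dots> \<le> G (\<Phi> R + K)" using bounds(1)[of "\<Phi> R + K"] by (simp add: g(3))
  finally have upper: "\<nu> \<le> G (\<Phi> R + K)" using R by linarith
  show "\<exists>!\<xi>. G \<xi> = \<nu>"
    using G_mono lower upper unfolding G_def
    by (intro strict_mono_continuous_ex1_preimage continuous_on_integral_mult_shifted_comp[OF a(1) c g(1)])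
  show "\<Phi> (- (\<bar>\<nu>\<bar> / m)) - K \<le> \<xi> \<and> \<xi> \<le> \<Phi> (\<bar>\<nu>\<bar> / m) + K" if "G \<xi> = \<nu>"
    using lower upper strict_mono_less_eq[OF G_mono] unfolding R_def that[symmetric] by simp
qed

lemma Lp_space_integrable:
  assumes "f \<in> Lp_space T p" "1 \<le> p"
  shows "integrable (lebesgue_on {0..T}) f"
proof (rule Bochner_Integration.integrable_bound[where f="\<lambda>t. 1 + \<bar>f t\<bar> powr p"])
  have "finite_measure (lebesgue_on {0..T})"
    by (rule finite_measure_lebesgue_on[OF lmeasurable_interval(1)])
  then show "integrable (lebesgue_on {0..T}) (\<lambda>t. 1 + \<bar>f t\<bar> powr p)"
    using assms(1) unfolding Lp_space_def
    by (auto intro!: Bochner_Integration.integrable_add finite_measure.integrable_const)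
  show "f \<in> borel_measurable (lebesgue_on {0..T})"
    using assms(1) unfolding Lp_space_def by auto
  have "\<bar>f t\<bar> \<le> 1 + \<bar>f t\<bar> powr p" for t
  proof (cases "\<bar>f t\<bar> \<le> 1")
    case False
    then have "\<bar>f t\<bar> powr 1 \<le> \<bar>f t\<bar> powr p" using assms(2) by (intro powr_mono) auto
    then show ?thesis using False by simp
  qed (simp add: add_increasing2)
  then show "AE t in lebesgue_on {0..T}. norm (f t) \<le> norm (1 + \<bar>f t\<bar> powr p)"
    by (intro AE_I2) simp
qed

lemma abs_integral_initial_segment_le:
  fixes f \<psi> :: "real \<Rightarrow> real"
  assumes f: "integrable (lebesgue_on {0..T}) f" and \<psi>: "integrable (lebesgue_on {0..T}) \<psi>"
    and bound: "AE t in lebesgue_on {0..T}. \<bar>f t\<bar> \<le> \<psi> t" and t: "t \<in> {0..T}"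
  shows "\<bar>\<integral>s. f s \<partial>lebesgue_on {0..t}\<bar> \<le> (\<integral>s. \<psi> s \<partial>lebesgue_on {0..T})"
proof -
  have "integrable (lebesgue_on {0..t}) f"
    using integrable_subinterval[OF f] t by auto
  then have int: "integrable lebesgue (\<lambda>s. indicator {0..t} s *\<^sub>R f s)"
    "integrable lebesgue (\<lambda>s. indicator {0..T} s *\<^sub>R \<psi> s)"
    using \<psi> by (simp_all add: integrable_restrict_space)
  have "AE s in lebesgue. s \<in> {0..T} \<longrightarrow> \<bar>f s\<bar> \<le> \<psi> s"
    using bound by (simp add: AE_restrict_space_iff)
  then have "AE s in lebesgue. \<bar>indicator {0..t} s *\<^sub>R f s\<bar> \<le> indicator {0..T} s *\<^sub>R \<psi> s"
    by eventually_elim (use t in \<open>auto simp: indicator_def\<close>)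
  then have "\<bar>\<integral>s. indicator {0..t} s *\<^sub>R f s \<partial>lebesgue\<bar> \<le> (\<integral>s. indicator {0..T} s *\<^sub>R \<psi> s \<partial>lebesgue)"
    using int by (intro order_trans[OF integral_abs_bound] integral_mono_AE) auto
  then show ?thesis by (simp add: integral_restrict_space)
qed

lemma integrable_inverse_between:
  fixes A h1 h2 :: "'a \<Rightarrow> real"
  assumes A: "A \<in> borel_measurable M" "\<forall>t\<in>space M. h1 t \<le> A t \<and> A t \<le> h2 t"
    and h1: "AE t in M. 0 < h1 t" "integrable M (\<lambda>t. 1 / h1 t)"
    and h2: "integrable M (\<lambda>t. 1 / h2 t)"
  shows "integrable M (\<lambda>t. 1 / A t)" and "AE t in M. 0 < 1 / A t"
    and "(\<integral>t. 1 / h2 t \<partial>M) \<le> (\<integral>t. 1 / A t \<partial>M)"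
proof -
  \<comment> \<open>Positivity of h1 is needed because 1 / 0 = 0: where h1 vanishes, 1 / h1 does not dominate 1 / A.\<close>
  have pointwise: "AE t in M. 0 < h1 t \<and> 0 < 1 / A t \<and> 1 / A t \<le> 1 / h1 t \<and> 1 / h2 t \<le> 1 / A t"
    using h1(1) AE_space
  proof eventually_elim
    case (elim t)
    then have "0 < h1 t" "h1 t \<le> A t" "A t \<le> h2 t" using A(2) by auto
    then show ?case by (auto intro: divide_left_mono)
  qed
  show int: "integrable M (\<lambda>t. 1 / A t)"
  proof (rule Bochner_Integration.integrable_bound[OF h1(2)])
    show "(\<lambda>t. 1 / A t) \<in> borel_measurable M" using A(1) by simp
    show "AE t in M. norm (1 / A t) \<le> norm (1 / h1 t)"
      using pointwise by eventually_elim auto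
  qed
  show "AE t in M. 0 < 1 / A t" using pointwise by (auto elim: eventually_mono)
  show "(\<integral>t. 1 / h2 t \<partial>M) \<le> (\<integral>t. 1 / A t \<partial>M)"
    using pointwise by (intro integral_mono_AE[OF h2 int]) (auto elim: eventually_mono)
qed

lemma integral_reciprocal_shifted_primitive_eq_unique:
  fixes A h1 h2 f \<psi> g \<Phi> :: "real \<Rightarrow> real"
  assumes "0 < T"
    and A: "continuous_on {0..T} A" "\<forall>t\<in>{0..T}. h1 t \<le> A t \<and> A t \<le> h2 t"
    and h1: "AE t in lebesgue_on {0..T}. 0 < h1 t" "integrable (lebesgue_on {0..T}) (\<lambda>t. 1 / h1 t)"
    and h2: "AE t in lebesgue_on {0..T}. 0 < h2 t" "integrable (lebesgue_on {0..T}) (\<lambda>t. 1 / h2 t)"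
    and f: "integrable (lebesgue_on {0..T}) f" "integrable (lebesgue_on {0..T}) \<psi>"
      "AE t in lebesgue_on {0..T}. \<bar>f t\<bar> \<le> \<psi> t"
    and g: "continuous_on UNIV g" "strict_mono g" "\<And>z. g (\<Phi> z) = z"
  defines "G \<equiv> \<lambda>\<xi>. \<integral>t. 1 / A t * g (\<xi> + (\<integral>s. f s \<partial>lebesgue_on {0..t})) \<partial>lebesgue_on {0..T}"
    and "m \<equiv> \<integral>t. 1 / h2 t \<partial>lebesgue_on {0..T}"
    and "K \<equiv> \<integral>t. \<psi> t \<partial>lebesgue_on {0..T}"
  shows "\<exists>!\<xi>. G \<xi> = \<nu>"
    and "G \<xi> = \<nu> \<Longrightarrow> \<Phi> (- (\<bar>\<nu>\<bar> / m)) - K \<le> \<xi> \<and> \<xi> \<le> \<Phi> (\<bar>\<nu>\<bar> / m) + K"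
proof -
  let ?M = "lebesgue_on {0..T}"
  have "finite_measure ?M" by (rule finite_measure_lebesgue_on) simp
  then have m_pos: "0 < m"
    using finite_measure.integral_less_AE_space[of ?M "\<lambda>_. 0" "\<lambda>t. 1 / h2 t"] h2 \<open>0 < T\<close>
    unfolding m_def by (auto simp: emeasure_restrict_space elim: eventually_mono)
  have A_meas: "A \<in> borel_measurable ?M"
    using A(1) by (rule continuous_imp_measurable_on_sets_lebesgue) simp
  have A_between: "\<forall>t\<in>space ?M. h1 t \<le> A t \<and> A t \<le> h2 t" using A(2) by simp
  note a = integrable_inverse_between[OF A_meas A_between h1 h2(2)]
  have a_nonneg: "AE t in ?M. 0 \<le> 1 / A t" using a(2) by (rule eventually_mono) simp
  have c_meas: "(\<lambda>t. \<integral>s. f s \<partial>lebesgue_on {0..t}) \<in> borel_measurable ?M"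
    by (intro continuous_imp_measurable_on_sets_lebesgue indefinite_integral_continuous_real f(1)) simp
  have c_bound: "\<forall>t\<in>space ?M. \<bar>\<integral>s. f s \<partial>lebesgue_on {0..t}\<bar> \<le> K"
    unfolding K_def space_lebesgue_on using abs_integral_initial_segment_le[OF f] by blast
  note unique = integral_mult_shifted_comp_eq_unique[OF a(1) a_nonneg m_pos a(3)[folded m_def]
      c_meas c_bound g, where \<nu>=\<nu>]
  show "\<exists>!\<xi>. G \<xi> = \<nu>" unfolding G_def by (rule unique(1))
  show "G \<xi> = \<nu> \<Longrightarrow> \<Phi> (- (\<bar>\<nu>\<bar> / m)) - K \<le> \<xi> \<and> \<xi> \<le> \<Phi> (\<bar>\<nu>\<bar> / m) + K"
    unfolding G_def by (rule unique(2))
qed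

theorem lemma2p6:
  fixes T p \<nu>1 \<nu>2 :: real
    and \<Phi> :: "real \<Rightarrow> real"
    and A F :: "(real \<Rightarrow> real) \<Rightarrow> real \<Rightarrow> real"
    and h1 h2 \<psi> :: "real \<Rightarrow> real"
  assumes T_pos: "T > 0"
    and p_gt1: "p > 1"
    and Phi_mono: "strict_mono \<Phi>"
    and Phi_homeo: "\<exists>\<Phi>'. homeomorphism UNIV UNIV \<Phi> \<Phi>'"
    and A_cont_val: "\<forall>x\<in>W1p T p. continuous_on {0..T} (A x)"
    and A_cont: "\<forall>x\<in>W1p T p. \<forall>\<epsilon>>0. \<exists>\<delta>>0. \<forall>y\<in>W1p T p.
                   sup_dist T x y < \<delta> \<longrightarrow> sup_dist T (A x) (A y) < \<epsilon>"
    and h1_cont: "continuous_on {0..T} h1" and h2_cont: "continuous_on {0..T} h2"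
    and h1_nonneg: "\<forall>t\<in>{0..T}. h1 t \<ge> 0" and h2_nonneg: "\<forall>t\<in>{0..T}. h2 t \<ge> 0"
    and h1_pos_ae: "AE t in lebesgue_on {0..T}. h1 t > 0"
    and h2_pos_ae: "AE t in lebesgue_on {0..T}. h2 t > 0"
    and h1_Lp: "(\<lambda>t. 1 / h1 t) \<in> Lp_space T p"
    and h2_Lp: "(\<lambda>t. 1 / h2 t) \<in> Lp_space T p"
    and A_bounds: "\<forall>x\<in>W1p T p. \<forall>t\<in>{0..T}. h1 t \<le> A x t \<and> A x t \<le> h2 t"
    and F_L1: "\<forall>x\<in>W1p T p. integrable (lebesgue_on {0..T}) (F x)"
    and F_cont: "\<forall>x\<in>W1p T p. \<forall>\<epsilon>>0. \<exists>\<delta>>0. \<forall>y\<in>W1p T p.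
                   sup_dist T x y < \<delta> \<longrightarrow> L1_dist T (F x) (F y) < \<epsilon>"
    and psi_L1: "integrable (lebesgue_on {0..T}) \<psi>"
    and psi_nonneg: "\<forall>t\<in>{0..T}. \<psi> t \<ge> 0"
    and F_bound: "\<forall>x\<in>W1p T p. AE t in lebesgue_on {0..T}. \<bar>F x t\<bar> \<le> \<psi> t"
  shows "(\<forall>x\<in>W1p T p. \<exists>!\<xi>::real.
            (LINT t|lebesgue_on {0..T}.
               (1 / A x t) * inv \<Phi> (\<xi> + (LINT s|lebesgue_on {0..t}. F x s))) = \<nu>2 - \<nu>1)
       \<and> (\<exists>c0>0. \<forall>x\<in>W1p T p. \<forall>\<xi>::real.
            (LINT t|lebesgue_on {0..T}.
               (1 / A x t) * inv \<Phi> (\<xi> + (LINT s|lebesgue_on {0..t}. F x s))) = \<nu>2 - \<nu>1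
            \<longrightarrow> \<bar>\<xi>\<bar> \<le> c0)"
  (is "(\<forall>x\<in>W1p T p. \<exists>!\<xi>. ?G x \<xi> = _) \<and> _")
proof -
  obtain \<Phi>' where \<Phi>': "homeomorphism UNIV UNIV \<Phi> \<Phi>'" using Phi_homeo by blast
  then have inv_\<Phi>: "inv \<Phi> = \<Phi>'" "\<And>z. \<Phi>' (\<Phi> z) = z"
    by (auto intro!: inv_equality dest: homeomorphism_apply1 homeomorphism_apply2)
  have \<Phi>'_cont: "continuous_on UNIV \<Phi>'" and \<Phi>'_mono: "strict_mono \<Phi>'"
    using \<Phi>' Phi_mono homeomorphism_image1[OF \<Phi>'] inv_\<Phi>(2)
    by (auto intro: homeomorphism_cont2 strict_mono_inv)
  have h_int: "integrable (lebesgue_on {0..T}) (\<lambda>t. 1 / h1 t)" "integrable (lebesgue_on {0..T}) (\<lambda>t. 1 / h2 t)"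
    using h1_Lp h2_Lp p_gt1 by (auto intro: Lp_space_integrable)
  define R where "R = \<bar>\<nu>2 - \<nu>1\<bar> / (\<integral>t. 1 / h2 t \<partial>lebesgue_on {0..T})"
  define K where "K = (\<integral>t. \<psi> t \<partial>lebesgue_on {0..T})"
  define c0 where "c0 = \<bar>\<Phi> (- R) - K\<bar> + \<bar>\<Phi> R + K\<bar> + 1"
  have solution: "\<exists>!\<xi>. ?G x \<xi> = \<nu>2 - \<nu>1" "?G x \<xi> = \<nu>2 - \<nu>1 \<Longrightarrow> \<Phi> (- R) - K \<le> \<xi> \<and> \<xi> \<le> \<Phi> R + K"
    if "x \<in> W1p T p" for x \<xi>
    using integral_reciprocal_shifted_primitive_eq_unique[OF T_pos A_cont_val[rule_format, OF that]
        bspec[OF A_bounds that] h1_pos_ae h_int(1) h2_pos_ae h_int(2) F_L1[rule_format, OF that] psi_L1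
        F_bound[rule_format, OF that] \<Phi>'_cont \<Phi>'_mono inv_\<Phi>(2), where \<nu>="\<nu>2 - \<nu>1"]
    unfolding inv_\<Phi>(1) R_def K_def by blast+
  have c0_bound: "\<bar>\<xi>\<bar> \<le> c0" if "x \<in> W1p T p" "?G x \<xi> = \<nu>2 - \<nu>1" for x \<xi>
    using solution(2)[OF that] unfolding c0_def by linarith
  show ?thesis
  proof (intro conjI ballI exI[of _ c0] allI impI)
    show "\<exists>!\<xi>. ?G x \<xi> = \<nu>2 - \<nu>1" if "x \<in> W1p T p" for x
      using solution(1)[OF that] .
    show "c0 > 0" unfolding c0_def by simp
  qed (fact c0_bound)
qed

end
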